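(* Let $p\neq 3$ be a prime and let $C(x_1,\ldots,x_r)=a_1x_1^3+a_2x_2^3+\cdots+a_rx_r^3$ with $a_1,\ldots,a_r$ integers. Suppose there are indices $1\leq i<j<k\leq r$ with $a_ia_ja_k\neq 0$ and $\nu_p(a_i)\equiv\nu_p(a_j)\equiv\nu_p(a_k)\pmod 3$. Then $R(C)$ is dense in $\mathbb{Q}_p$.
   Context: For an integral form $F$ in $r$ variables, $R(F)=\{F(\overline{x})/F(\overline{y}):\overline{x},\overline{y}\in\mathbb{Z}^r,\ F(\overline{y})\neq 0\}$, viewed as a subset of the field $\mathbb{Q}_p$ of $p$-adic numbers with its $p$-adic topology. $\nu_p$ denotes the $p$-adic valuation. *)

theory Defs
  imports "HOL-Computational_Algebra.Computational_Algebra"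
begin

text \<open>p-adic valuation of a nonzero rational number: nu_p(a/b) = nu_p(a) - nu_p(b).
  (The value at 0 is irrelevant below; we always guard against it.)\<close>
definition padic_val_rat :: "nat \<Rightarrow> rat \<Rightarrow> int" where
  "padic_val_rat p q =
     (let (a, b) = quotient_of q in
        int (multiplicity (int p) a) - int (multiplicity (int p) b))"

definition diag_cubic :: "(nat \<Rightarrow> int) \<Rightarrow> nat \<Rightarrow> (nat \<Rightarrow> int) \<Rightarrow> int" where
  "diag_cubic a r x = (\<Sum>i = 1..r. a i * x i ^ 3)"

definition ratio_set :: "nat \<Rightarrow> ((nat \<Rightarrow> int) \<Rightarrow> int) \<Rightarrow> rat set" where
  "ratio_set r F = {of_int (F x) / of_int (F y) | x y.
      (\<forall>i. i \<notin> {1..r} \<longrightarrow> x i = 0) \<and> (\<forall>i. i \<notin> {1..r} \<longrightarrow> y i = 0) \<and> F y \<noteq> 0}"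

text \<open>A set S of rationals is dense in Q_p. Since Q is dense in Q_p, this holds iff every
  rational q is a p-adic limit of elements of S: for every bound n there is s in S with
  s = q or nu_p(s - q) >= n (i.e. |s - q|_p <= p^(-n)).\<close>
definition padic_dense :: "nat \<Rightarrow> rat set \<Rightarrow> bool" where
  "padic_dense p S \<longleftrightarrow>
     (\<forall>q :: rat. \<forall>n :: int. \<exists>s\<in>S. s = q \<or> padic_val_rat p (s - q) \<ge> n)"

end

theory Submission
  imports Defs "HOL-Number_Theory.Number_Theory"
begin

(* Write a_l = p^(v_l) b_l with p not dividing b_l. As the v_l agree modulo 3, substituting
   x_l = p^(e_l) X_l on the three coordinates turns C into p^V (b_1 X^3 + b_2 Y^3 + b_3 Z^3),
   so R(C) contains the ratio set of this ternary form with unit coefficients.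
   That form has a zero modulo p with a unit coordinate: for p = 2 mod 3 every residue is a
   cube, and for p = 1 mod 3 a counting argument with the cyclotomic numbers of order 3 yields
   v and 1 + v in the two non-trivial cubic residue classes. Since p <> 3 the zero is simple,
   so Hensel's lemma makes the form represent every multiple of p modulo every p^N, and a
   rational u/w is then approximated by A/B with A = p u and B = p w modulo p^N. *)

section \<open>Arithmetic modulo a prime\<close>

lemma inverse_mod_prime:
  fixes c :: int
  assumes "prime p" and "\<not> int p dvd c"
  obtains c' where "[c * c' = 1] (mod int p)"
  using assms cong_solve_coprime_int
  by (metis coprime_commute prime_imp_coprime prime_nat_int_transfer)

lemma not_dvd_if_cong_inverse:
  fixes b d :: int
  assumes "prime p" and "[b * d = 1] (mod int p)"
  shows "\<not> int p dvd d"
  using assms prime_gt_1_nat[OF assms(1)]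
  by (metis cong_dvd_iff dvd_mult int_dvd_int_iff nat_dvd_1_iff_1 of_nat_1 less_irrefl)

lemma prime_not_dvd_mult:
  fixes a b :: int
  assumes "prime p" and "\<not> int p dvd a" and "\<not> int p dvd b"
  shows "\<not> int p dvd a * b"
  using assms by (simp add: prime_dvd_mult_iff prime_nat_int_transfer)

lemma prime_not_dvd_3:
  assumes "prime p" and "p \<noteq> 3"
  shows "\<not> int p dvd 3"
proof
  assume "int p dvd 3"
  then have "p dvd 3" by (metis int_dvd_int_iff of_nat_numeral)
  moreover have "p \<le> 3" using dvd_imp_le[OF \<open>p dvd 3\<close>] by simp
  moreover have "p \<ge> 2" using prime_ge_2_nat[OF assms(1)] .
  ultimately show False using assms(2) by (cases "p = 2") auto
qed

lemma cong_inverse_unique: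
  fixes v w :: int
  assumes "[v * v' = 1] (mod m)" and "[w * w' = 1] (mod m)" and "[v' = w'] (mod m)"
  shows "[v = w] (mod m)"
proof -
  have "[v = v * (w * w')] (mod m)"
    using cong_mult[OF cong_refl[of v] assms(2)] by (simp add: cong_sym)
  also have "[v * (w * w') = v * (w * v')] (mod m)"
    using assms(3) by (intro cong_mult cong_refl) (rule cong_sym)
  also have "v * (w * v') = w * (v * v')" by (simp add: ac_simps)
  also have "[w * (v * v') = w] (mod m)"
    using cong_mult[OF cong_refl[of w] assms(1)] by simp
  finally show ?thesis .
qed

lemma fermat_theorem_int:
  fixes c :: int
  assumes "prime p" and "\<not> int p dvd c"
  shows "[c ^ (p - 1) = 1] (mod int p)"
proof -
  have c_mod: "int (nat (c mod int p)) = c mod int p"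
    using prime_gt_0_nat[OF \<open>prime p\<close>] by simp
  moreover have "\<not> p dvd nat (c mod int p)"
    using \<open>\<not> int p dvd c\<close> by (metis c_mod dvd_mod_iff dvd_refl int_dvd_int_iff)
  ultimately have "[(c mod int p) ^ (p - 1) = 1] (mod int p)"
    using fermat_theorem[OF \<open>prime p\<close>] by (metis cong_int_iff of_nat_1 of_nat_power)
  then show ?thesis by (simp add: cong_def power_mod)
qed

lemma cong_mult_power_prime_minus_2:
  fixes v :: int
  assumes "prime p" and "\<not> int p dvd v"
  shows "[v * v ^ (p - 2) = 1] (mod int p)"
proof -
  have "p - 1 = Suc (p - 2)" using prime_ge_2_nat[OF assms(1)] by linarith
  then have "v * v ^ (p - 2) = v ^ (p - 1)" by (metis power_Suc)
  then show ?thesis using fermat_theorem_int[OF assms] by simp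
qed

lemma cube_root_mod_prime:
  fixes c :: int
  assumes "prime p" and "p mod 3 = 2"
  shows "\<exists>t. [t ^ 3 = c] (mod int p)"
proof (cases "int p dvd c")
  case True
  then show ?thesis by (intro exI[of _ 0]) (simp add: cong_def dvd_eq_mod_eq_0)
next
  case False
  obtain s where s: "3 * s = 2 * (p - 1) + 1"
    using \<open>p mod 3 = 2\<close> by (intro that[of "(2 * p - 1) div 3"]) presburger
  have "[(c ^ (p - 1))\<^sup>2 * c = 1\<^sup>2 * c] (mod int p)"
    using fermat_theorem_int[OF \<open>prime p\<close> False] by (intro cong_mult cong_pow) auto
  moreover have "(c ^ s) ^ 3 = (c ^ (p - 1))\<^sup>2 * c"
  proof -
    have "(c ^ s) ^ 3 = c ^ (2 * (p - 1) + 1)"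
      by (metis power_mult mult.commute s)
    also have "\<dots> = (c ^ (p - 1))\<^sup>2 * c"
      by (metis power_add power_one_right power_mult mult.commute)
    finally show ?thesis .
  qed
  ultimately show ?thesis by (intro exI[of _ "c ^ s"]) (simp only: power_one mult_1)
qed

lemma card_le_card_if_residue_map:
  fixes A B :: "int set" and f :: "int \<Rightarrow> int"
  assumes "A \<subseteq> {0..<m}" and "finite B" and "\<And>v. v \<in> A \<Longrightarrow> f v mod m \<in> B"
    and "\<And>v w. v \<in> A \<Longrightarrow> w \<in> A \<Longrightarrow> [f v = f w] (mod m) \<Longrightarrow> [v = w] (mod m)"
  shows "card A \<le> card B"
proof (rule card_inj_on_le)
  show "inj_on (\<lambda>v. f v mod m) A"
  proof (rule inj_onI)
    fix v w assume "v \<in> A" "w \<in> A" "f v mod m = f w mod m"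
    then have "[v = w] (mod m)" using assms(4) unfolding cong_def by blast
    moreover have "v \<in> {0..<m}" "w \<in> {0..<m}" using \<open>v \<in> A\<close> \<open>w \<in> A\<close> assms(1) by auto
    ultimately show "v = w" by (intro cong_less_imp_eq_int) auto
  qed
  show "(\<lambda>v. f v mod m) ` A \<subseteq> B" using assms(3) by blast
qed (rule assms(2))

section \<open>Cubic residue classes modulo a prime \<open>p \<equiv> 1 (mod 3)\<close>\<close>

locale cube_cosets =
  fixes p g :: nat
  assumes prime: "prime p"
    and p_mod_3: "p mod 3 = 1"
    and primroot: "residue_primroot p g"
begin

text \<open>\<open>cube_coset l v\<close>: the residue of \<open>v\<close> lies in the coset \<open>g\<^sup>l C\<close> of the subgroup
  \<open>C\<close> of non-zero cubes, which has index 3.\<close>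

definition cube_coset :: "nat \<Rightarrow> int \<Rightarrow> bool" where
  "cube_coset l v \<longleftrightarrow> (\<exists>i. i mod 3 = l \<and> [v = int g ^ i] (mod int p))"

lemma unit_cong_power:
  assumes "\<not> int p dvd v"
  obtains i where "[v = int g ^ i] (mod int p)"
proof -
  have p1: "p > 1" using prime prime_gt_1_nat by blast
  define w where "w = nat (v mod int p)"
  have w: "int w = v mod int p" unfolding w_def using p1 by simp
  have "w \<in> totatives p"
  proof -
    have "\<not> p dvd w"
      using assms w by (metis dvd_mod_iff dvd_refl int_dvd_int_iff)
    moreover have "w < p"
      using w pos_mod_bound[of "int p" v] p1 by linarith
    ultimately show ?thesis
      using prime by (auto simp: totatives_def prime_imp_coprime coprime_commute intro!: Nat.gr0I)
  qed
  then have "w \<in> (\<lambda>i. g ^ i mod p) ` {..<totient p}"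
    using residue_primroot_is_generator[OF p1 primroot] by (simp add: bij_betw_def)
  then obtain i where "g ^ i mod p = w" by blast
  then have "[int g ^ i = v] (mod int p)"
    using w by (simp add: cong_def flip: of_nat_mod of_nat_power)
  then show ?thesis using that cong_sym by blast
qed

lemma power_cong_iff: "[int g ^ i = int g ^ j] (mod int p) \<longleftrightarrow> [i = j] (mod (p - 1))"
proof -
  have "coprime p g" and "ord p g = p - 1"
    using primroot prime by (auto simp: residue_primroot_def totient_prime)
  then show ?thesis
    using order_divides_expdiff[of p g i j] by (metis cong_int_iff of_nat_power)
qed

lemma cube_coset_lt_3: "cube_coset l v \<Longrightarrow> l < 3"
  unfolding cube_coset_def by auto

lemma cube_coset_not_dvd:
  assumes "cube_coset l v"
  shows "\<not> int p dvd v"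
proof
  assume "int p dvd v"
  obtain i where "[v = int g ^ i] (mod int p)"
    using assms unfolding cube_coset_def by (elim exE conjE) (rule that)
  then have "int p dvd int g ^ i" using \<open>int p dvd v\<close> cong_dvd_iff by blast
  then have "p dvd g" using prime prime_dvd_power_nat by (metis of_nat_power int_dvd_int_iff)
  moreover have "coprime p g" using primroot by (simp add: residue_primroot_def)
  ultimately show False using prime by (metis coprime_absorb_left not_prime_unit)
qed

lemma cube_coset_exists:
  assumes "\<not> int p dvd v"
  obtains l where "cube_coset l v"
proof -
  obtain i where "[v = int g ^ i] (mod int p)" using unit_cong_power[OF assms] .
  then have "cube_coset (i mod 3) v" unfolding cube_coset_def by auto
  then show ?thesis using that by blast
qed

lemma cube_coset_unique:
  assumes "cube_coset l v" and "cube_coset l' v"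
  shows "l = l'"
proof -
  obtain i where i: "i mod 3 = l" "[v = int g ^ i] (mod int p)"
    using assms(1) unfolding cube_coset_def by (elim exE conjE) (rule that)
  obtain j where j: "j mod 3 = l'" "[v = int g ^ j] (mod int p)"
    using assms(2) unfolding cube_coset_def by (elim exE conjE) (rule that)
  have "[int g ^ i = int g ^ j] (mod int p)" using i(2) j(2) cong_sym cong_trans by blast
  then have "[i = j] (mod (p - 1))" by (simp add: power_cong_iff)
  moreover have "3 dvd p - 1" using p_mod_3 by presburger
  ultimately have "[i = j] (mod 3)" by (rule cong_dvd_modulus_nat)
  then show ?thesis using i(1) j(1) by (simp add: cong_def)
qed

lemma cube_coset_cong: "cube_coset l u \<Longrightarrow> [u = v] (mod int p) \<Longrightarrow> cube_coset l v"
  unfolding cube_coset_def by (blast intro: cong_sym cong_trans)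

lemma cube_coset_mult:
  assumes "cube_coset l u" and "cube_coset l' v"
  shows "cube_coset ((l + l') mod 3) (u * v)"
proof -
  obtain i where i: "i mod 3 = l" "[u = int g ^ i] (mod int p)"
    using assms(1) unfolding cube_coset_def by (elim exE conjE) (rule that)
  obtain j where j: "j mod 3 = l'" "[v = int g ^ j] (mod int p)"
    using assms(2) unfolding cube_coset_def by (elim exE conjE) (rule that)
  have "[u * v = int g ^ (i + j)] (mod int p)"
    unfolding power_add using i(2) j(2) by (rule cong_mult)
  moreover have "(i + j) mod 3 = (l + l') mod 3" using i(1) j(1) by (metis mod_add_eq)
  ultimately show ?thesis unfolding cube_coset_def by blast
qed

lemma cube_coset_cube:
  assumes "\<not> int p dvd t"
  shows "cube_coset 0 (t ^ 3)"
proof -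
  obtain i where "[t = int g ^ i] (mod int p)" using unit_cong_power[OF assms] .
  then have "[t ^ 3 = int g ^ (3 * i)] (mod int p)"
    by (metis cong_pow power_mult mult.commute)
  then show ?thesis unfolding cube_coset_def by (intro exI[of _ "3 * i"]) auto
qed

lemma cube_coset_one: "cube_coset 0 1"
  and cube_coset_minus_one: "cube_coset 0 (-1)"
  using cube_coset_cube[of 1] cube_coset_cube[of "-1"] prime_gt_1_nat[OF prime] by auto

lemma cube_coset_generator: "cube_coset 1 (int g)"
  unfolding cube_coset_def by (intro exI[of _ 1]) auto

lemma cube_coset_inverse_index:
  assumes "cube_coset l v" and "cube_coset l' u" and "[v * u = 1] (mod int p)"
  shows "(l + l') mod 3 = 0"
  using cube_coset_cong[OF cube_coset_mult[OF assms(1,2)] assms(3)] cube_coset_one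
  by (rule cube_coset_unique)

lemma cube_coset_inverse:
  assumes "cube_coset l v" and "[v * u = 1] (mod int p)" and "(l + l') mod 3 = 0" and "l' < 3"
  shows "cube_coset l' u"
proof -
  obtain l'' where l'': "cube_coset l'' u"
    using cube_coset_exists not_dvd_if_cong_inverse[OF prime assms(2)] by blast
  have "(l + l'') mod 3 = 0" using cube_coset_inverse_index[OF assms(1) l'' assms(2)] .
  then have "l'' = l'" using assms(3,4) cube_coset_lt_3[OF l''] by presburger
  then show ?thesis using l'' by simp
qed

lemma cube_coset_zero_cube:
  assumes "cube_coset 0 v"
  obtains t where "[v = t ^ 3] (mod int p)"
proof -
  obtain i where "i mod 3 = 0" "[v = int g ^ i] (mod int p)"
    using assms unfolding cube_coset_def by (elim exE conjE) (rule that)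
  then have "i = 3 * (i div 3)" by presburger
  then have "[v = (int g ^ (i div 3)) ^ 3] (mod int p)"
    using \<open>[v = int g ^ i] (mod int p)\<close> by (metis power_mult mult.commute)
  then show ?thesis using that by blast
qed

lemma cube_coset_quotient:
  assumes "cube_coset l v" and "cube_coset l w"
  obtains u where "[v = w * u ^ 3] (mod int p)"
proof -
  obtain w' where w': "[w * w' = 1] (mod int p)"
    using inverse_mod_prime[OF prime cube_coset_not_dvd[OF assms(2)]] by blast
  obtain l' where l': "cube_coset l' w'"
    using cube_coset_exists not_dvd_if_cong_inverse[OF prime w'] by blast
  have "cube_coset ((l + l') mod 3) (v * w')"
    using cube_coset_mult[OF assms(1) l'] .
  then obtain u where u: "[v * w' = u ^ 3] (mod int p)"
    using cube_coset_inverse_index[OF assms(2) l' w'] cube_coset_zero_cube by auto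
  have "[v = v * (w * w')] (mod int p)"
    using cong_mult[OF cong_refl[of v] w'] by (simp add: cong_sym)
  also have "v * (w * w') = w * (v * w')" by (simp add: ac_simps)
  also have "[\<dots> = w * u ^ 3] (mod int p)"
    using u by (intro cong_mult cong_refl)
  finally show ?thesis using that by blast
qed

definition coset_residues :: "nat \<Rightarrow> int set" where
  "coset_residues l = {v \<in> {0..<int p}. cube_coset l v}"

text \<open>The cardinality of \<open>cyclotomic_residues l m\<close> is the cyclotomic number \<open>(l, m)\<close> of order 3.\<close>

definition cyclotomic_residues :: "nat \<Rightarrow> nat \<Rightarrow> int set" where
  "cyclotomic_residues l m = {v \<in> {0..<int p}. cube_coset l v \<and> cube_coset m (1 + v)}"

lemma finite_cyclotomic_residues: "finite (cyclotomic_residues l m)"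
  and finite_coset_residues: "finite (coset_residues l)"
  unfolding cyclotomic_residues_def coset_residues_def
  by (rule finite_subset[of _ "{0..<int p}"]; auto)+

lemma mod_p_in_range: "v mod int p \<in> {0..<int p}"
  using prime_gt_0_nat[OF prime] by simp

lemma card_coset_residues_split:
  assumes "l \<noteq> 0"
  shows "card (coset_residues l) =
    card (cyclotomic_residues l 0) + card (cyclotomic_residues l 1) + card (cyclotomic_residues l 2)"
proof -
  have succ_coset: "cube_coset 0 (1 + v) \<or> cube_coset 1 (1 + v) \<or> cube_coset 2 (1 + v)"
    if "cube_coset l v" for v
  proof -
    have "\<not> int p dvd 1 + v"
    proof
      assume "int p dvd 1 + v"
      then have "[v = -1] (mod int p)" by (simp add: cong_iff_dvd_diff add.commute)
      then have "cube_coset l (-1)" using cube_coset_cong[OF that] by blast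
      then show False using cube_coset_unique[OF _ cube_coset_minus_one] assms by blast
    qed
    then obtain m where "cube_coset m (1 + v)" using cube_coset_exists by blast
    moreover from this have "m < 3" by (rule cube_coset_lt_3)
    then have "m = 0 \<or> m = 1 \<or> m = 2" by linarith
    ultimately show ?thesis by blast
  qed
  have "coset_residues l =
      cyclotomic_residues l 0 \<union> cyclotomic_residues l 1 \<union> cyclotomic_residues l 2"
    unfolding coset_residues_def cyclotomic_residues_def
    using succ_coset by blast
  moreover have "cyclotomic_residues l m \<inter> cyclotomic_residues l m' = {}" if "m \<noteq> m'" for m m'
    unfolding cyclotomic_residues_def using cube_coset_unique that by blast
  ultimately show ?thesis
    by (simp add: card_Un_disjoint finite_cyclotomic_residues Int_Un_distrib2)
qed

lemma card_cyclotomic_residues_swap: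
  "card (cyclotomic_residues l m) \<le> card (cyclotomic_residues m l)"
proof (rule card_le_card_if_residue_map[where f = "\<lambda>v. - 1 - v"])
  fix v assume "v \<in> cyclotomic_residues l m"
  then have v: "cube_coset l v" "cube_coset m (1 + v)"
    unfolding cyclotomic_residues_def by auto
  have "cube_coset m ((-1) * (1 + v))"
    using cube_coset_mult[OF cube_coset_minus_one v(2)] cube_coset_lt_3[OF v(2)] by simp
  then have "cube_coset m ((- 1 - v) mod int p)"
    by (rule cube_coset_cong) (simp add: cong_def)
  moreover have "cube_coset l ((-1) * v)"
    using cube_coset_mult[OF cube_coset_minus_one v(1)] cube_coset_lt_3[OF v(1)] by simp
  then have "cube_coset l (1 + (- 1 - v) mod int p)"
    by (rule cube_coset_cong) (simp add: cong_def mod_add_right_eq)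
  ultimately show "(- 1 - v) mod int p \<in> cyclotomic_residues m l"
    unfolding cyclotomic_residues_def using mod_p_in_range by blast
next
  fix v w assume "[- 1 - v = - 1 - w] (mod int p)"
  then show "[v = w] (mod int p)"
    using cong_diff[OF cong_refl[of "-1"]] by fastforce
qed (use finite_cyclotomic_residues in \<open>auto simp: cyclotomic_residues_def\<close>)

lemma card_cyclotomic_residues_inverse:
  assumes "(l + l') mod 3 = 0" and "l' < 3"
  shows "card (cyclotomic_residues l m) \<le> card (cyclotomic_residues l' ((m + l') mod 3))"
proof (rule card_le_card_if_residue_map[where f = "\<lambda>v. v ^ (p - 2)"])
  fix v assume "v \<in> cyclotomic_residues l m"
  then have v: "cube_coset l v" "cube_coset m (1 + v)"
    unfolding cyclotomic_residues_def by auto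
  define u where "u = v ^ (p - 2) mod int p"
  have vu: "[v * u = 1] (mod int p)"
    using cong_mult_power_prime_minus_2[OF prime cube_coset_not_dvd[OF v(1)]]
    unfolding u_def by (simp add: cong_def mod_mult_right_eq)
  have "cube_coset l' u" using cube_coset_inverse[OF v(1) vu assms] .
  moreover have "cube_coset ((m + l') mod 3) ((1 + v) * u)"
    using cube_coset_mult[OF v(2) \<open>cube_coset l' u\<close>] .
  then have "cube_coset ((m + l') mod 3) (1 + u)"
    by (rule cube_coset_cong)
      (use cong_add[OF cong_refl[of u] vu] in \<open>simp add: algebra_simps\<close>)
  ultimately show "v ^ (p - 2) mod int p \<in> cyclotomic_residues l' ((m + l') mod 3)"
    unfolding cyclotomic_residues_def u_def using mod_p_in_range by blast
next
  fix v w assume "v \<in> cyclotomic_residues l m" "w \<in> cyclotomic_residues l m"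
    and "[v ^ (p - 2) = w ^ (p - 2)] (mod int p)"
  then show "[v = w] (mod int p)"
    using cong_inverse_unique cong_mult_power_prime_minus_2[OF prime] cube_coset_not_dvd
    unfolding cyclotomic_residues_def by blast
qed (use finite_cyclotomic_residues in \<open>auto simp: cyclotomic_residues_def\<close>)

lemma card_cyclotomic_residues_from_cubes:
  "card (cyclotomic_residues 0 1) + card (cyclotomic_residues 0 2) < card (coset_residues 0)"
proof -
  have minus_one: "int p - 1 \<in> coset_residues 0"
    using cube_coset_cong[OF cube_coset_minus_one, of "int p - 1"] prime_gt_0_nat[OF prime]
    unfolding coset_residues_def by (simp add: cong_def)
  have "cyclotomic_residues 0 m \<subseteq> coset_residues 0 - {int p - 1}" for m
    unfolding cyclotomic_residues_def coset_residues_def using cube_coset_not_dvd by fastforce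
  then have "card (cyclotomic_residues 0 1 \<union> cyclotomic_residues 0 2) \<le> card (coset_residues 0 - {int p - 1})"
    by (intro card_mono) (auto simp: finite_coset_residues)
  moreover have "cyclotomic_residues 0 1 \<inter> cyclotomic_residues 0 2 = {}"
    unfolding cyclotomic_residues_def using cube_coset_unique by fastforce
  moreover have "card (coset_residues 0 - {int p - 1}) < card (coset_residues 0)"
    by (rule card_Diff1_less[OF finite_coset_residues minus_one])
  ultimately show ?thesis
    by (simp add: card_Un_disjoint finite_cyclotomic_residues)
qed

lemma card_coset_residues_le: "card (coset_residues 0) \<le> card (coset_residues 1)"
proof (rule card_le_card_if_residue_map[where f = "\<lambda>v. int g * v"])
  fix v assume "v \<in> coset_residues 0"
  then have "cube_coset 1 (int g * v)"
    using cube_coset_mult[OF cube_coset_generator] unfolding coset_residues_def by fastforce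
  then show "int g * v mod int p \<in> coset_residues 1"
    unfolding coset_residues_def using mod_p_in_range cube_coset_cong by (auto simp: cong_def)
next
  fix v w assume "[int g * v = int g * w] (mod int p)"
  moreover have "coprime (int g) (int p)"
    using primroot by (simp add: residue_primroot_def coprime_commute)
  ultimately show "[v = w] (mod int p)" by (simp add: cong_mult_lcancel)
qed (use finite_coset_residues in \<open>auto simp: coset_residues_def\<close>)

text \<open>If \<open>(1, 2)\<close> were empty, then \<open>v \<mapsto> -1 - v\<close> (swapping \<open>(l, m)\<close>) and
  \<open>v \<mapsto> v\<inverse>\<close> (sending \<open>(1, 1)\<close> to \<open>(2, 0)\<close>) would squeeze the coset of \<open>g\<close> into the
  cubes other than \<open>-1\<close>, although multiplication by \<open>g\<close> embeds the cubes into that coset.\<close>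

theorem exists_consecutive_cube_cosets: "\<exists>v. cube_coset 1 v \<and> cube_coset 2 (1 + v)"
proof (rule ccontr)
  assume "\<nexists>v. cube_coset 1 v \<and> cube_coset 2 (1 + v)"
  then have "cyclotomic_residues 1 2 = {}" unfolding cyclotomic_residues_def by blast
  then have "card (coset_residues 1) = card (cyclotomic_residues 1 0) + card (cyclotomic_residues 1 1)"
    using card_coset_residues_split[of 1] by simp
  also have "\<dots> \<le> card (cyclotomic_residues 0 1) + card (cyclotomic_residues 2 0)"
    using card_cyclotomic_residues_swap[of 1 0] card_cyclotomic_residues_inverse[of 1 2 1] by simp
  also have "\<dots> \<le> card (cyclotomic_residues 0 1) + card (cyclotomic_residues 0 2)"
    using card_cyclotomic_residues_swap[of 2 0] by simp
  also have "\<dots> < card (coset_residues 0)" by (rule card_cyclotomic_residues_from_cubes)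
  also have "\<dots> \<le> card (coset_residues 1)" by (rule card_coset_residues_le)
  finally show False by simp
qed

section \<open>Diagonal ternary cubics modulo \<open>p\<close> and Hensel lifting\<close>

lemma monic_diag_cubic_zero_mod_ordered:
  assumes "cube_coset l \<beta>" and "cube_coset l' \<gamma>" and "l \<le> l'"
  shows "\<exists>X Y Z. (\<not> int p dvd X \<or> \<not> int p dvd Y \<or> \<not> int p dvd Z) \<and>
    [X ^ 3 + \<beta> * Y ^ 3 + \<gamma> * Z ^ 3 = 0] (mod int p)"
proof -
  have one: "\<not> int p dvd 1" using cube_coset_not_dvd[OF cube_coset_one] .
  have "l' < 3" using cube_coset_lt_3[OF assms(2)] .
  then consider "l = 0" | "l = l'" | "l = 1" "l' = 2" using assms(3) by linarith
  then show ?thesis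
  proof cases
    case 1
    then obtain u where "[\<beta> = 1 * u ^ 3] (mod int p)"
      using cube_coset_quotient[OF assms(1)] cube_coset_one by blast
    then have "[(- u) ^ 3 + \<beta> * 1 ^ 3 + \<gamma> * 0 ^ 3 = 0] (mod int p)"
      by (simp add: cong_iff_dvd_diff)
    then show ?thesis using one by blast
  next
    case 2
    then obtain u where "[\<gamma> = \<beta> * u ^ 3] (mod int p)"
      using cube_coset_quotient[OF assms(2)] assms(1) by blast
    then have "[0 ^ 3 + \<beta> * (- u) ^ 3 + \<gamma> * 1 ^ 3 = 0] (mod int p)"
      by (simp add: cong_iff_dvd_diff)
    then show ?thesis using one by blast
  next
    case 3
    obtain v where v: "cube_coset 1 v" "cube_coset 2 (1 + v)"
      using exists_consecutive_cube_cosets by blast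
    obtain y where y: "[v = \<beta> * y ^ 3] (mod int p)"
      using cube_coset_quotient[OF v(1)] assms(1) 3 by blast
    obtain z where z: "[1 + v = \<gamma> * z ^ 3] (mod int p)"
      using cube_coset_quotient[OF v(2)] assms(2) 3 by blast
    have "[1 + \<beta> * y ^ 3 - \<gamma> * z ^ 3 = 1 + v - (1 + v)] (mod int p)"
      using y z by (intro cong_diff cong_add cong_refl) (simp_all add: cong_sym)
    then have "[1 ^ 3 + \<beta> * y ^ 3 + \<gamma> * (- z) ^ 3 = 0] (mod int p)" by simp
    then show ?thesis using one by blast
  qed
qed

lemma monic_diag_cubic_zero_mod:
  assumes "\<not> int p dvd \<beta>" and "\<not> int p dvd \<gamma>"
  shows "\<exists>X Y Z. (\<not> int p dvd X \<or> \<not> int p dvd Y \<or> \<not> int p dvd Z) \<and>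
    [X ^ 3 + \<beta> * Y ^ 3 + \<gamma> * Z ^ 3 = 0] (mod int p)"
proof -
  obtain l where l: "cube_coset l \<beta>" by (rule cube_coset_exists[OF assms(1)])
  obtain l' where l': "cube_coset l' \<gamma>" by (rule cube_coset_exists[OF assms(2)])
  show ?thesis
  proof (cases "l \<le> l'")
    case True
    then show ?thesis using monic_diag_cubic_zero_mod_ordered[OF l l'] by blast
  next
    case False
    then obtain X Z Y where nontrivial: "\<not> int p dvd X \<or> \<not> int p dvd Z \<or> \<not> int p dvd Y"
      and zero: "[X ^ 3 + \<gamma> * Z ^ 3 + \<beta> * Y ^ 3 = 0] (mod int p)"
      using monic_diag_cubic_zero_mod_ordered[OF l' l] by auto
    have "[X ^ 3 + \<beta> * Y ^ 3 + \<gamma> * Z ^ 3 = 0] (mod int p)"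
      using zero by (simp add: ac_simps)
    then show ?thesis using nontrivial by blast
  qed
qed

end

lemma monic_diag_cubic_zero_mod_prime:
  assumes "prime p" and "p \<noteq> 3" and "\<not> int p dvd \<beta>" and "\<not> int p dvd \<gamma>"
  shows "\<exists>X Y Z. (\<not> int p dvd X \<or> \<not> int p dvd Y \<or> \<not> int p dvd Z) \<and>
    [X ^ 3 + \<beta> * Y ^ 3 + \<gamma> * Z ^ 3 = 0] (mod int p)"
proof -
  have "\<not> 3 dvd p"
  proof
    assume "3 dvd p"
    then have "(3::nat) = 1 \<or> 3 = p" using assms(1) unfolding prime_nat_iff by blast
    then show False using assms(2) by simp
  qed
  then have "p mod 3 = 1 \<or> p mod 3 = 2" by presburger
  then consider "p mod 3 = 1" | "p mod 3 = 2" by blast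
  then show ?thesis
  proof cases
    case 1
    obtain g where "residue_primroot p g"
      using prime_primitive_root_exists[OF prime_gt_1_nat[OF assms(1)] assms(1)] ..
    then interpret cube_cosets p g using assms(1) 1 by unfold_locales
    show ?thesis using monic_diag_cubic_zero_mod assms(3,4) .
  next
    case 2
    obtain t where "[t ^ 3 = - \<beta>] (mod int p)" using cube_root_mod_prime[OF assms(1) 2] ..
    then have "[t ^ 3 + \<beta> * 1 ^ 3 + \<gamma> * 0 ^ 3 = 0] (mod int p)"
      by (simp add: cong_iff_dvd_diff)
    moreover have "\<not> int p dvd 1" using prime_gt_1_nat[OF assms(1)] by simp
    ultimately show ?thesis by blast
  qed
qed

lemma diag_cubic_zero_mod_prime:
  fixes b1 b2 b3 :: int
  assumes "prime p" and "p \<noteq> 3"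
    and "\<not> int p dvd b1" and "\<not> int p dvd b2" and "\<not> int p dvd b3"
  shows "\<exists>X Y Z. (\<not> int p dvd X \<or> \<not> int p dvd Y \<or> \<not> int p dvd Z) \<and>
    [b1 * X ^ 3 + b2 * Y ^ 3 + b3 * Z ^ 3 = 0] (mod int p)"
proof -
  obtain d where d: "[b1 * d = 1] (mod int p)" using inverse_mod_prime[OF assms(1,3)] .
  have "\<not> int p dvd d * b2" "\<not> int p dvd d * b3"
    using not_dvd_if_cong_inverse[OF assms(1) d] assms(4,5) prime_not_dvd_mult[OF assms(1)]
    by blast+
  then obtain X Y Z where nontriv: "\<not> int p dvd X \<or> \<not> int p dvd Y \<or> \<not> int p dvd Z"
    and zero: "[X ^ 3 + d * b2 * Y ^ 3 + d * b3 * Z ^ 3 = 0] (mod int p)"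
    using monic_diag_cubic_zero_mod_prime[OF assms(1,2)] by blast
  have "[b1 * X ^ 3 + 1 * (b2 * Y ^ 3 + b3 * Z ^ 3)
      = b1 * X ^ 3 + (b1 * d) * (b2 * Y ^ 3 + b3 * Z ^ 3)] (mod int p)"
    using d by (intro cong_add cong_mult cong_refl) (rule cong_sym)
  then have "[b1 * X ^ 3 + b2 * Y ^ 3 + b3 * Z ^ 3
      = b1 * X ^ 3 + (b1 * d) * (b2 * Y ^ 3 + b3 * Z ^ 3)] (mod int p)"
    by (simp add: add.assoc)
  also have "b1 * X ^ 3 + (b1 * d) * (b2 * Y ^ 3 + b3 * Z ^ 3)
      = b1 * (X ^ 3 + d * b2 * Y ^ 3 + d * b3 * Z ^ 3)" by (simp add: algebra_simps)
  also have "[\<dots> = b1 * 0] (mod int p)" using zero by (intro cong_mult cong_refl)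
  finally show ?thesis using nontriv by auto
qed

lemma cube_hensel_lift:
  fixes b x c :: int
  assumes p: "prime p" "p \<noteq> 3" and b: "\<not> int p dvd b" and x: "\<not> int p dvd x"
    and root: "[b * x ^ 3 = c] (mod int p)"
  shows "\<exists>y. [y = x] (mod int p) \<and> [b * y ^ 3 = c] (mod int p ^ Suc N)"
proof (induction N)
  case 0
  then show ?case using root by (auto intro!: exI[of _ x])
next
  case (Suc N)
  then obtain y where y: "[y = x] (mod int p)" and "[b * y ^ 3 = c] (mod int p ^ Suc N)"
    by blast
  define P where "P = int p ^ Suc N"
  obtain e where e: "b * y ^ 3 - c = P * e"
    using \<open>[b * y ^ 3 = c] (mod int p ^ Suc N)\<close> unfolding P_def cong_iff_dvd_diff by blast
  define D where "D = 3 * b * y\<^sup>2"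
  have "\<not> int p dvd y" using x y cong_dvd_iff by blast
  then have "\<not> int p dvd D"
    unfolding D_def using p b prime_not_dvd_3 prime_not_dvd_mult power2_eq_square by metis
  then obtain d where d: "[D * d = 1] (mod int p)" using inverse_mod_prime[OF p(1)] by blast
  define y' where "y' = y + P * (- e * d)"
  \<comment> \<open>Newton step: the linear term cancels the error modulo \<open>p P\<close>,
    the remaining terms are divisible by \<open>P\<^sup>2\<close>.\<close>
  have expand: "b * y' ^ 3 - c = P * e * (1 - D * d) + P\<^sup>2 * (3 * b * y * (e * d)\<^sup>2 - b * P * (e * d) ^ 3)"
    unfolding y'_def D_def using e by (simp add: algebra_simps power2_eq_square power3_eq_cube)
  have "int p dvd 1 - D * d" using d by (simp add: cong_iff_dvd_diff dvd_diff_commute)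
  then have "P * int p dvd P * e * (1 - D * d)" by (simp add: mult.assoc mult_dvd_mono)
  moreover have "P * int p dvd P\<^sup>2"
    unfolding P_def power2_eq_square by (intro mult_dvd_mono) simp_all
  ultimately have "P * int p dvd b * y' ^ 3 - c"
    unfolding expand by (simp add: dvd_add dvd_mult2)
  then have lifted: "[b * y' ^ 3 = c] (mod int p ^ Suc (Suc N))"
    unfolding P_def cong_iff_dvd_diff by (metis power_Suc2)
  have "[P * (- e * d) = 0] (mod int p)" unfolding P_def by (simp add: cong_0_iff)
  then have "[y' = x] (mod int p)" unfolding y'_def using cong_add[OF y] by fastforce
  then show ?case using lifted by blast
qed

lemma diag_cubic_values_mod_prime_power:
  fixes b1 b2 b3 w :: int
  assumes p: "prime p" "p \<noteq> 3"
    and b: "\<not> int p dvd b1" "\<not> int p dvd b2" "\<not> int p dvd b3"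
    and w: "int p dvd w"
  shows "\<exists>X Y Z. [b1 * X ^ 3 + b2 * Y ^ 3 + b3 * Z ^ 3 = w] (mod int p ^ N)"
proof -
  have lift: "\<exists>y. [b * y ^ 3 + r = w] (mod int p ^ N)"
    if unit_b: "\<not> int p dvd b" and unit_x: "\<not> int p dvd x"
      and zero: "[b * x ^ 3 + r = 0] (mod int p)" for b x r
  proof -
    have "int p dvd (b * x ^ 3 + r) - w"
      using zero w by (simp add: cong_0_iff)
    then have "[b * x ^ 3 = w - r] (mod int p)"
      by (simp add: cong_iff_dvd_diff algebra_simps)
    then obtain y where "[b * y ^ 3 = w - r] (mod int p ^ Suc N)"
      using cube_hensel_lift[OF p unit_b unit_x] by blast
    then have "[b * y ^ 3 + r = w] (mod int p ^ Suc N)"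
      by (simp add: cong_iff_dvd_diff algebra_simps)
    then show ?thesis by (meson cong_dvd_modulus le_imp_power_dvd le_SucI order_refl)
  qed
  obtain X Y Z where nontrivial: "\<not> int p dvd X \<or> \<not> int p dvd Y \<or> \<not> int p dvd Z"
    and zero: "[b1 * X ^ 3 + b2 * Y ^ 3 + b3 * Z ^ 3 = 0] (mod int p)"
    using diag_cubic_zero_mod_prime[OF p b] by blast
  from nontrivial consider "\<not> int p dvd X" | "\<not> int p dvd Y" | "\<not> int p dvd Z" by blast
  then show ?thesis
  proof cases
    case 1
    then show ?thesis using lift[OF b(1) 1, of "b2 * Y ^ 3 + b3 * Z ^ 3"] zero
      by (auto simp: ac_simps)
  next
    case 2
    then show ?thesis using lift[OF b(2) 2, of "b1 * X ^ 3 + b3 * Z ^ 3"] zero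
      by (auto simp: ac_simps)
  next
    case 3
    then show ?thesis using lift[OF b(3) 3, of "b1 * X ^ 3 + b2 * Y ^ 3"] zero
      by (auto simp: ac_simps)
  qed
qed

section \<open>Ratio sets and \<open>p\<close>-adic density\<close>

lemma padic_val_rat_of_int_div:
  fixes A B :: int
  assumes "prime p" and "A \<noteq> 0" and "B \<noteq> 0"
  shows "padic_val_rat p (of_int A / of_int B) =
    int (multiplicity (int p) A) - int (multiplicity (int p) B)"
proof -
  obtain a b where q: "quotient_of (of_int A / of_int B) = (a, b)"
    by (cases "quotient_of (of_int A / of_int B)") auto
  have "b > 0" using quotient_of_denom_pos[OF q] .
  have "(of_int A / of_int B :: rat) = of_int a / of_int b" using quotient_of_div[OF q] .
  then have "(of_int (A * b) :: rat) = of_int (a * B)"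
    using \<open>B \<noteq> 0\<close> \<open>b > 0\<close> by (simp add: field_simps)
  then have cross: "A * b = a * B" by (simp only: of_int_eq_iff)
  then have "a \<noteq> 0" using \<open>A \<noteq> 0\<close> \<open>b > 0\<close> by auto
  have "prime_elem (int p)" using assms(1) by (simp add: prime_nat_int_transfer)
  then have "multiplicity (int p) A + multiplicity (int p) b =
      multiplicity (int p) a + multiplicity (int p) B"
    using cross prime_elem_multiplicity_mult_distrib \<open>A \<noteq> 0\<close> \<open>a \<noteq> 0\<close> \<open>B \<noteq> 0\<close> \<open>b > 0\<close>
    by (metis less_irrefl)
  then show ?thesis unfolding padic_val_rat_def q by simp
qed

lemma multiplicity_eq_if_cong:
  fixes B w :: int
  assumes "prime p" and "w \<noteq> 0" and "multiplicity (int p) w < N"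
    and "[B = w] (mod int p ^ N)"
  shows "B \<noteq> 0" and "multiplicity (int p) B = multiplicity (int p) w"
proof -
  define k where "k = multiplicity (int p) w"
  have "int p ^ Suc k dvd int p ^ N"
    using assms(3) unfolding k_def by (intro le_imp_power_dvd) simp
  with assms(4) have cong_Suc_k: "[B = w] (mod int p ^ Suc k)"
    by (rule cong_dvd_modulus)
  then have "[B = w] (mod int p ^ k)"
    by (rule cong_dvd_modulus) (simp add: le_imp_power_dvd)
  moreover have "int p ^ k dvd w" unfolding k_def by (rule multiplicity_dvd)
  ultimately have "int p ^ k dvd B" using cong_dvd_iff by blast
  have "\<not> is_unit (int p)" using prime_gt_1_nat[OF assms(1)] by simp
  then have "\<not> int p ^ Suc k dvd w"
    using power_dvd_iff_le_multiplicity[OF assms(2), of "int p" "Suc k"] unfolding k_def by simp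
  then have "\<not> int p ^ Suc k dvd B" using cong_Suc_k cong_dvd_iff by blast
  then show "B \<noteq> 0" by auto
  show "multiplicity (int p) B = multiplicity (int p) w"
    using multiplicity_eqI[OF \<open>int p ^ k dvd B\<close> \<open>\<not> int p ^ Suc k dvd B\<close>] unfolding k_def .
qed

definition supported_vectors :: "nat \<Rightarrow> (nat \<Rightarrow> int) set" where
  "supported_vectors r = {x. \<forall>i. i \<notin> {1..r} \<longrightarrow> x i = 0}"

definition ternary_cubic_values :: "int \<Rightarrow> int \<Rightarrow> int \<Rightarrow> int set" where
  "ternary_cubic_values b1 b2 b3 = {b1 * X ^ 3 + b2 * Y ^ 3 + b3 * Z ^ 3 | X Y Z. True}"

definition ratios_of :: "int set \<Rightarrow> rat set" where
  "ratios_of V = {of_int A / of_int B | A B. A \<in> V \<and> B \<in> V \<and> B \<noteq> 0}"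

lemma ratios_of_mono: "V \<subseteq> W \<Longrightarrow> ratios_of V \<subseteq> ratios_of W"
  unfolding ratios_of_def by blast

lemma ratios_of_scale:
  assumes "c \<noteq> 0"
  shows "ratios_of ((*) c ` V) = ratios_of V"
proof -
  have cancel: "(of_int (c * A) / of_int (c * B) :: rat) = of_int A / of_int B" for A B
    using assms by simp
  show ?thesis
  proof (rule equalityI; rule subsetI)
    fix s assume "s \<in> ratios_of ((*) c ` V)"
    then obtain A B where "A \<in> V" "B \<in> V" "B \<noteq> 0" "s = of_int (c * A) / of_int (c * B)"
      unfolding ratios_of_def by auto
    then show "s \<in> ratios_of V" unfolding ratios_of_def cancel by blast
  next
    fix s assume "s \<in> ratios_of V"
    then obtain A B where "A \<in> V" "B \<in> V" "B \<noteq> 0" "s = of_int A / of_int B"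
      unfolding ratios_of_def by blast
    then have "c * A \<in> (*) c ` V" "c * B \<in> (*) c ` V" "c * B \<noteq> 0"
      and "s = of_int (c * A) / of_int (c * B)"
      using assms cancel by auto
    then show "s \<in> ratios_of ((*) c ` V)" unfolding ratios_of_def by blast
  qed
qed

lemma ratio_set_eq_ratios_of: "ratio_set r F = ratios_of (F ` supported_vectors r)"
  unfolding ratio_set_def ratios_of_def supported_vectors_def by blast

lemma padic_dense_mono: "padic_dense p S \<Longrightarrow> S \<subseteq> T \<Longrightarrow> padic_dense p T"
  unfolding padic_dense_def by blast

text \<open>\<open>V\<close> only approximates multiples of \<open>p\<close>, so \<open>u / w\<close> is approximated by \<open>A / B\<close> with
  \<open>A \<equiv> p u\<close> and \<open>B \<equiv> p w\<close>; then \<open>B\<close> has valuation \<open>\<nu>\<^sub>p(w) + 1\<close> and the error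
  \<open>(A w - u B) / (B w)\<close> valuation at least \<open>N - 2 \<nu>\<^sub>p(w) - 1\<close>.\<close>

lemma padic_dense_ratios_of:
  fixes V :: "int set"
  assumes p: "prime p" and approx: "\<And>w N. int p dvd w \<Longrightarrow> \<exists>v\<in>V. [v = w] (mod int p ^ N)"
  shows "padic_dense p (ratios_of V)"
  unfolding padic_dense_def
proof (intro allI)
  fix q :: rat and n :: int
  obtain u w where uw: "quotient_of q = (u, w)" by (cases "quotient_of q") auto
  have "w > 0" using quotient_of_denom_pos[OF uw] .
  have q: "q = of_int u / of_int w" using quotient_of_div[OF uw] .
  define N where "N = nat n + 2 * multiplicity (int p) w + 2"
  obtain A where "A \<in> V" and A: "[A = int p * u] (mod int p ^ N)"
    using approx[of "int p * u" N] by auto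
  obtain B where "B \<in> V" and B: "[B = int p * w] (mod int p ^ N)"
    using approx[of "int p * w" N] by auto
  have mult_pw: "multiplicity (int p) (int p * w) = Suc (multiplicity (int p) w)"
    using \<open>w > 0\<close> prime_gt_1_nat[OF p] by (intro multiplicity_times_same) auto
  then have "multiplicity (int p) (int p * w) < N" unfolding N_def by simp
  moreover have "int p * w \<noteq> 0" using \<open>w > 0\<close> p by (simp add: prime_gt_0_nat)
  ultimately have "B \<noteq> 0" and mult_B: "multiplicity (int p) B = Suc (multiplicity (int p) w)"
    using multiplicity_eq_if_cong[OF p _ _ B] mult_pw by auto
  define s where "s = (of_int A / of_int B :: rat)"
  have "s \<in> ratios_of V" unfolding s_def ratios_of_def using \<open>A \<in> V\<close> \<open>B \<in> V\<close> \<open>B \<noteq> 0\<close> by blast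
  moreover have "n \<le> padic_val_rat p (s - q)" if "s \<noteq> q"
  proof -
    define num where "num = A * w - u * B"
    have "s - q = of_int num / of_int (B * w)"
      unfolding s_def q num_def using \<open>B \<noteq> 0\<close> \<open>w > 0\<close> by (simp add: field_simps)
    then have "num \<noteq> 0" using that by auto
    have "[num = int p * u * w - u * (int p * w)] (mod int p ^ N)"
      unfolding num_def using cong_diff[OF cong_mult[OF A cong_refl] cong_mult[OF cong_refl B]] .
    then have "int p ^ N dvd num" by (simp add: cong_0_iff algebra_simps)
    then have "N \<le> multiplicity (int p) num"
      using power_dvd_iff_le_multiplicity[OF \<open>num \<noteq> 0\<close>] prime_gt_1_nat[OF p] by simp
    moreover have "multiplicity (int p) (B * w) = multiplicity (int p) B + multiplicity (int p) w"
      using \<open>B \<noteq> 0\<close> \<open>w > 0\<close> p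
      by (intro prime_elem_multiplicity_mult_distrib) (auto simp: prime_nat_int_transfer)
    ultimately show ?thesis
      using \<open>s - q = _\<close> padic_val_rat_of_int_div[OF p \<open>num \<noteq> 0\<close>, of "B * w"] \<open>B \<noteq> 0\<close> \<open>w > 0\<close>
        mult_B unfolding N_def by simp
  qed
  ultimately show "\<exists>s\<in>ratios_of V. s = q \<or> n \<le> padic_val_rat p (s - q)" by blast
qed

lemma padic_dense_ratios_of_ternary_cubic:
  assumes "prime p" and "p \<noteq> 3"
    and "\<not> int p dvd b1" and "\<not> int p dvd b2" and "\<not> int p dvd b3"
  shows "padic_dense p (ratios_of (ternary_cubic_values b1 b2 b3))"
proof (rule padic_dense_ratios_of[OF assms(1)])
  fix w N assume "int p dvd w"
  then obtain X Y Z where "[b1 * X ^ 3 + b2 * Y ^ 3 + b3 * Z ^ 3 = w] (mod int p ^ N)"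
    using diag_cubic_values_mod_prime_power[OF assms] by blast
  then show "\<exists>v\<in>ternary_cubic_values b1 b2 b3. [v = w] (mod int p ^ N)"
    unfolding ternary_cubic_values_def
    by (intro bexI[of _ "b1 * X ^ 3 + b2 * Y ^ 3 + b3 * Z ^ 3"]) auto
qed

section \<open>Reduction to a ternary form with unit coefficients\<close>

lemma cube_scaling_to_valuation:
  fixes a :: int
  assumes "prime p" and "a \<noteq> 0" and "multiplicity (int p) a \<le> V"
    and "multiplicity (int p) a mod 3 = V mod 3"
  obtains e b where "\<not> int p dvd b" and "a * (int p ^ e) ^ 3 = int p ^ V * b"
proof -
  define m where "m = multiplicity (int p) a"
  have "\<not> is_unit (int p)" using prime_gt_1_nat[OF assms(1)] by simp
  then obtain b where b: "a = int p ^ m * b" "\<not> int p dvd b"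
    using multiplicity_decompose'[OF assms(2)] unfolding m_def by blast
  have "3 dvd V - m" using mod_eq_dvd_iff_nat[OF assms(3), of 3] assms(4) unfolding m_def by metis
  then obtain e where "V - m = 3 * e" by (elim dvdE)
  then have "V = m + 3 * e" using assms(3) unfolding m_def by linarith
  then have "a * (int p ^ e) ^ 3 = int p ^ V * b"
    unfolding b(1) by (simp add: power_add mult_ac flip: power_mult)
  then show ?thesis using that b(2) by blast
qed

lemma diag_cubic_three_coordinates:
  assumes "{i, j, k} \<subseteq> {1..r}" and "i \<noteq> j" and "i \<noteq> k" and "j \<noteq> k"
  shows "diag_cubic a r (\<lambda>l. if l = i then X else if l = j then Y else if l = k then Z else 0)
    = a i * X ^ 3 + a j * Y ^ 3 + a k * Z ^ 3"
proof -
  let ?x = "\<lambda>l. if l = i then X else if l = j then Y else if l = k then Z else 0"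
  have "diag_cubic a r ?x = (\<Sum>l\<in>{i, j, k}. a l * ?x l ^ 3)"
    unfolding diag_cubic_def by (rule sum.mono_neutral_right) (use assms(1) in auto)
  also have "\<dots> = a i * X ^ 3 + a j * Y ^ 3 + a k * Z ^ 3"
    using assms(2-4) by (simp add: add.assoc)
  finally show ?thesis .
qed

lemma diag_cubic_values_contain_scaled:
  fixes a :: "nat \<Rightarrow> int"
  assumes p: "prime p" and ijk: "{i, j, k} \<subseteq> {1..r}" "i \<noteq> j" "i \<noteq> k" "j \<noteq> k"
    and nonzero: "a i * a j * a k \<noteq> 0"
    and "multiplicity (int p) (a i) mod 3 = multiplicity (int p) (a j) mod 3"
    and "multiplicity (int p) (a j) mod 3 = multiplicity (int p) (a k) mod 3"
  obtains V b1 b2 b3 where "\<not> int p dvd b1" and "\<not> int p dvd b2" and "\<not> int p dvd b3"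
    and "(*) (int p ^ V) ` ternary_cubic_values b1 b2 b3 \<subseteq> diag_cubic a r ` supported_vectors r"
proof -
  define V where "V = multiplicity (int p) (a i) mod 3 + 3 * (multiplicity (int p) (a i)
    + multiplicity (int p) (a j) + multiplicity (int p) (a k))"
  have "a i \<noteq> 0" "a j \<noteq> 0" "a k \<noteq> 0" using nonzero by auto
  have le: "multiplicity (int p) (a i) \<le> V" "multiplicity (int p) (a j) \<le> V"
    "multiplicity (int p) (a k) \<le> V" unfolding V_def by simp_all
  have "V mod 3 = multiplicity (int p) (a i) mod 3" unfolding V_def mod_mult_self2 by simp
  then have md: "multiplicity (int p) (a i) mod 3 = V mod 3" "multiplicity (int p) (a j) mod 3 = V mod 3"
    "multiplicity (int p) (a k) mod 3 = V mod 3" using assms(7,8) by simp_all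
  obtain e1 b1 where b1: "\<not> int p dvd b1" "a i * (int p ^ e1) ^ 3 = int p ^ V * b1"
    by (rule cube_scaling_to_valuation[OF p \<open>a i \<noteq> 0\<close> le(1) md(1)])
  obtain e2 b2 where b2: "\<not> int p dvd b2" "a j * (int p ^ e2) ^ 3 = int p ^ V * b2"
    by (rule cube_scaling_to_valuation[OF p \<open>a j \<noteq> 0\<close> le(2) md(2)])
  obtain e3 b3 where b3: "\<not> int p dvd b3" "a k * (int p ^ e3) ^ 3 = int p ^ V * b3"
    by (rule cube_scaling_to_valuation[OF p \<open>a k \<noteq> 0\<close> le(3) md(3)])
  have scale: "c * (int p ^ e * X) ^ 3 = int p ^ V * b * X ^ 3"
    if "c * (int p ^ e) ^ 3 = int p ^ V * b" for c e b X
    by (simp only: power_mult_distrib mult.assoc[symmetric] that)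
  show ?thesis
  proof (rule that[OF b1(1) b2(1) b3(1)], rule subsetI)
    fix v assume "v \<in> (*) (int p ^ V) ` ternary_cubic_values b1 b2 b3"
    then obtain X Y Z where v: "v = int p ^ V * (b1 * X ^ 3 + b2 * Y ^ 3 + b3 * Z ^ 3)"
      unfolding ternary_cubic_values_def by blast
    define x where "x = (\<lambda>l. if l = i then int p ^ e1 * X else if l = j then int p ^ e2 * Y
      else if l = k then int p ^ e3 * Z else 0)"
    have "diag_cubic a r x = a i * (int p ^ e1 * X) ^ 3 + a j * (int p ^ e2 * Y) ^ 3
        + a k * (int p ^ e3 * Z) ^ 3"
      unfolding x_def by (rule diag_cubic_three_coordinates[OF ijk])
    also have "\<dots> = v"
      unfolding v scale[OF b1(2)] scale[OF b2(2)] scale[OF b3(2)] by (simp add: algebra_simps)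
    finally show "v \<in> diag_cubic a r ` supported_vectors r"
      using ijk(1) by (intro image_eqI[where x = x]) (auto simp: x_def supported_vectors_def)
  qed
qed

theorem corollary1p6:
  fixes p r :: nat and a :: "nat \<Rightarrow> int" and i j k :: nat
  assumes "prime p" and "p \<noteq> 3"
    and "1 \<le> i" and "i < j" and "j < k" and "k \<le> r"
    and "a i * a j * a k \<noteq> 0"
    and "multiplicity (int p) (a i) mod 3 = multiplicity (int p) (a j) mod 3"
    and "multiplicity (int p) (a j) mod 3 = multiplicity (int p) (a k) mod 3"
  shows "padic_dense p (ratio_set r (diag_cubic a r))"
proof -
  have ijk: "{i, j, k} \<subseteq> {1..r}" "i \<noteq> j" "i \<noteq> k" "j \<noteq> k" using assms(3-6) by auto
  obtain V b1 b2 b3 where units: "\<not> int p dvd b1" "\<not> int p dvd b2" "\<not> int p dvd b3"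
    and scaled: "(*) (int p ^ V) ` ternary_cubic_values b1 b2 b3 \<subseteq> diag_cubic a r ` supported_vectors r"
    by (rule diag_cubic_values_contain_scaled[OF assms(1) ijk assms(7-9)])
  have "ratios_of (ternary_cubic_values b1 b2 b3)
      = ratios_of ((*) (int p ^ V) ` ternary_cubic_values b1 b2 b3)"
    using prime_gt_0_nat[OF assms(1)] by (simp add: ratios_of_scale)
  also have "\<dots> \<subseteq> ratio_set r (diag_cubic a r)"
    unfolding ratio_set_eq_ratios_of using scaled by (rule ratios_of_mono)
  finally show ?thesis
    using padic_dense_ratios_of_ternary_cubic[OF assms(1,2) units] padic_dense_mono by blast
qed

end
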